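(* Let $G$ be a proper interval graph on vertex set $[n]$, $t\ge2$, and $I=I_t(G)\subset K[x_1,\dots,x_n]$. Then for every positive integer $m$, $I^m$ has linear quotients.
   Context: $I_t(G)$ is the ideal generated by all squarefree monomials $x_{i_1}\cdots x_{i_t}$ with $\{i_1,\dots,i_t\}$ an independent set of $G$. A monomial ideal $J$ has linear quotients if its minimal monomial generators can be ordered $w_1,\dots,w_r$ so that for each $i\ge2$ the colon ideal $\langle w_1,\dots,w_{i-1}\rangle : w_i$ is generated by variables. A proper interval graph is a graph whose vertices can be assigned real intervals, none properly containing another, such that two vertices are adjacent iff their intervals intersect. *)

theory Defs
  imports Complex_Main
begin

text \<open>Monomials of K[x_1,...,x_n] are exponent vectors nat \<Rightarrow> nat supported in {1..n};
  divisibility of monomials is pointwise \<le>, product is pointwise +.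
  A monomial ideal is represented by the set of monomials it contains
  (it is the K-span of these monomials; the field K plays no role).\<close>

definition mons :: "nat \<Rightarrow> (nat \<Rightarrow> nat) set" where
  "mons n = {u. \<forall>k. k \<notin> {1..n} \<longrightarrow> u k = 0}"

definition mmul :: "(nat \<Rightarrow> nat) \<Rightarrow> (nat \<Rightarrow> nat) \<Rightarrow> (nat \<Rightarrow> nat)" where
  "mmul u v = (\<lambda>k. u k + v k)"

definition mdvd :: "(nat \<Rightarrow> nat) \<Rightarrow> (nat \<Rightarrow> nat) \<Rightarrow> bool" where
  "mdvd u v \<longleftrightarrow> (\<forall>k. u k \<le> v k)"

definition ideal_mons :: "nat \<Rightarrow> (nat \<Rightarrow> nat) set \<Rightarrow> (nat \<Rightarrow> nat) set" where
  "ideal_mons n Gs = {u \<in> mons n. \<exists>g\<in>Gs. mdvd g u}"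

definition min_gens :: "(nat \<Rightarrow> nat) set \<Rightarrow> (nat \<Rightarrow> nat) set" where
  "min_gens M = {u \<in> M. \<forall>v\<in>M. mdvd v u \<longrightarrow> v = u}"

definition colon_mons :: "nat \<Rightarrow> (nat \<Rightarrow> nat) set \<Rightarrow> (nat \<Rightarrow> nat) \<Rightarrow> (nat \<Rightarrow> nat) set" where
  "colon_mons n M w = {u \<in> mons n. mmul u w \<in> M}"

definition var_mon :: "nat \<Rightarrow> (nat \<Rightarrow> nat)" where
  "var_mon j = (\<lambda>k. if k = j then 1 else 0)"

definition generated_by_variables :: "nat \<Rightarrow> (nat \<Rightarrow> nat) set \<Rightarrow> bool" where
  "generated_by_variables n M \<longleftrightarrow> (\<exists>V \<subseteq> {1..n}. M = ideal_mons n (var_mon ` V))"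

definition has_linear_quotients :: "nat \<Rightarrow> (nat \<Rightarrow> nat) set \<Rightarrow> bool" where
  "has_linear_quotients n M \<longleftrightarrow>
     (\<exists>ws. distinct ws \<and> set ws = min_gens M \<and>
        (\<forall>i. 0 < i \<and> i < length ws \<longrightarrow>
           generated_by_variables n (colon_mons n (ideal_mons n (set (take i ws))) (ws ! i))))"

fun pow_gens :: "(nat \<Rightarrow> nat) set \<Rightarrow> nat \<Rightarrow> (nat \<Rightarrow> nat) set" where
  "pow_gens Gs 0 = {\<lambda>k. 0}"
| "pow_gens Gs (Suc m) = {mmul g h | g h. g \<in> Gs \<and> h \<in> pow_gens Gs m}"

definition simple_graph :: "nat \<Rightarrow> nat set set \<Rightarrow> bool" where
  "simple_graph n E \<longleftrightarrow> (\<forall>e\<in>E. e \<subseteq> {1..n} \<and> card e = 2)"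

definition proper_interval_graph :: "nat \<Rightarrow> nat set set \<Rightarrow> bool" where
  "proper_interval_graph n E \<longleftrightarrow> simple_graph n E \<and>
     (\<exists>l r :: nat \<Rightarrow> real.
        (\<forall>i\<in>{1..n}. l i \<le> r i) \<and>
        (\<forall>i\<in>{1..n}. \<forall>j\<in>{1..n}. \<not> ({l i..r i} \<subset> {l j..r j})) \<and>
        (\<forall>i\<in>{1..n}. \<forall>j\<in>{1..n}. i \<noteq> j \<longrightarrow>
            ({i, j} \<in> E \<longleftrightarrow> {l i..r i} \<inter> {l j..r j} \<noteq> {})))"

definition independent_set :: "nat \<Rightarrow> nat set set \<Rightarrow> nat set \<Rightarrow> bool" where
  "independent_set n E S \<longleftrightarrow> S \<subseteq> {1..n} \<and> (\<forall>i\<in>S. \<forall>j\<in>S. {i, j} \<notin> E)"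

definition sqfree_mon :: "nat set \<Rightarrow> (nat \<Rightarrow> nat)" where
  "sqfree_mon S = (\<lambda>k. if k \<in> S then 1 else 0)"

definition It_gens :: "nat \<Rightarrow> nat set set \<Rightarrow> nat \<Rightarrow> (nat \<Rightarrow> nat) set" where
  "It_gens n E t = {sqfree_mon S | S. independent_set n E S \<and> card S = t}"

end

theory Submission
  imports Defs "HOL-Library.List_Lexorder"
begin

text \<open>Order the vertices by left endpoint; as no interval contains another, the intervals through
  any point form a segment of this order. The load of a monomial at a point is the total exponent
  of the vertices whose interval contains the point. The generators of the m-th power are exactly
  the monomials of degree m t whose load is at most m everywhere: a product of m independent sets
  has load at most m at every point, and conversely, writing the vertices in order, each repeated
  as often as its exponent, and cutting this word into blocks of length m, the vertices at which
  blocks start form an independent t-set whose removal leaves degree (m - 1) t and load at most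
  m - 1. List these monomials lexicographically decreasing along the vertex order. If u comes after
  v, they first differ at a vertex j with u_j < v_j; moving one unit of u from the first vertex k
  with u_k > v_k to j gives a generator listed before u and dividing x_j u. By this exchange
  property every colon ideal of the ordering is generated by variables.\<close>

lemma mons_vanish: "u \<in> mons n \<Longrightarrow> k \<notin> {1..n} \<Longrightarrow> u k = 0"
  by (simp add: mons_def)

lemma mmul_mons: "u \<in> mons n \<Longrightarrow> v \<in> mons n \<Longrightarrow> mmul u v \<in> mons n"
  by (simp add: mons_def mmul_def)

lemma mdvd_trans: "mdvd u v \<Longrightarrow> mdvd v w \<Longrightarrow> mdvd u w"
  unfolding mdvd_def using order_trans by blast

lemma mdvd_antisym: "mdvd u v \<Longrightarrow> mdvd v u \<Longrightarrow> u = v"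
  unfolding mdvd_def by (simp add: antisym ext)

lemma mdvd_mmul_left: "mdvd u u' \<Longrightarrow> mdvd (mmul u v) (mmul u' v)"
  by (simp add: mdvd_def mmul_def)

lemma mdvd_ideal_mons: "g \<in> Gs \<Longrightarrow> u \<in> mons n \<Longrightarrow> mdvd g u \<Longrightarrow> u \<in> ideal_mons n Gs"
  unfolding ideal_mons_def by blast

lemma mdvd_refl: "mdvd u u"
  by (simp add: mdvd_def)

definition mdeg :: "nat \<Rightarrow> (nat \<Rightarrow> nat) \<Rightarrow> nat" where
  "mdeg n u = (\<Sum>k\<in>{1..n}. u k)"

lemma mdeg_mmul: "mdeg n (mmul u v) = mdeg n u + mdeg n v"
  by (simp add: mdeg_def mmul_def sum.distrib)

lemma mdeg_sqfree_mon: "S \<subseteq> {1..n} \<Longrightarrow> mdeg n (sqfree_mon S) = card S"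
  by (simp add: mdeg_def sqfree_mon_def sum.If_cases Int_absorb1)

lemma mdvd_eq_if_mdeg_eq:
  assumes "g \<in> mons n" "u \<in> mons n" "mdvd g u" "mdeg n g = mdeg n u"
  shows "g = u"
proof (rule ccontr)
  assume "g \<noteq> u"
  then obtain k where k: "g k \<noteq> u k" by auto
  have "k \<in> {1..n}"
  proof (rule ccontr)
    assume "k \<notin> {1..n}"
    then have "g k = 0" "u k = 0" using assms(1,2) by (simp_all add: mons_vanish)
    then show False using k by simp
  qed
  moreover have "g k < u k" using assms(3) k unfolding mdvd_def using le_neq_implies_less by blast
  ultimately have "mdeg n g < mdeg n u"
    using assms(3) unfolding mdeg_def mdvd_def by (intro sum_strict_mono_ex1) auto
  then show False using assms(4) by simp
qed

lemma mmul_quotient: "mdvd g u \<Longrightarrow> mmul g (\<lambda>i. u i - g i) = u"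
  by (simp add: mdvd_def mmul_def fun_eq_iff)

text \<open>The monomial u x_j / x_k, provided u k > 0 (subtraction is truncated).\<close>

definition exchange_var :: "(nat \<Rightarrow> nat) \<Rightarrow> nat \<Rightarrow> nat \<Rightarrow> (nat \<Rightarrow> nat)" where
  "exchange_var u j k = (\<lambda>i. u i + var_mon j i - var_mon k i)"

lemma exchange_var_add_var_mon:
  "0 < u k \<Longrightarrow> exchange_var u j k i + var_mon k i = u i + var_mon j i"
  by (auto simp: exchange_var_def var_mon_def)

lemma exchange_var_other: "i \<noteq> j \<Longrightarrow> i \<noteq> k \<Longrightarrow> exchange_var u j k i = u i"
  by (simp add: exchange_var_def var_mon_def)

lemma exchange_var_same: "j \<noteq> k \<Longrightarrow> exchange_var u j k j = Suc (u j)"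
  by (simp add: exchange_var_def var_mon_def)

lemma exchange_var_mdvd: "mdvd (exchange_var u j k) (mmul (var_mon j) u)"
  unfolding exchange_var_def mdvd_def mmul_def by (intro allI) linarith

lemma exchange_var_mons: "u \<in> mons n \<Longrightarrow> j \<in> {1..n} \<Longrightarrow> exchange_var u j k \<in> mons n"
  by (auto simp: mons_def exchange_var_def var_mon_def)

lemma sum_exchange_var:
  assumes "finite A" "0 < u k"
  shows "(\<Sum>i\<in>A. exchange_var u j k i) + (if k \<in> A then 1 else 0) =
    (\<Sum>i\<in>A. u i) + (if j \<in> A then 1 else 0)"
proof -
  have "(\<Sum>i\<in>A. exchange_var u j k i) + (\<Sum>i\<in>A. var_mon k i) =
      (\<Sum>i\<in>A. u i) + (\<Sum>i\<in>A. var_mon j i)"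
    using assms(2) by (simp add: sum.distrib[symmetric] exchange_var_add_var_mon)
  then show ?thesis using assms(1) by (simp add: var_mon_def sum.delta')
qed

lemma finite_pow_gens: "finite Gs \<Longrightarrow> finite (pow_gens Gs d)"
proof (induction d)
  case (Suc d)
  have "pow_gens Gs (Suc d) = (\<lambda>(g, h). mmul g h) ` (Gs \<times> pow_gens Gs d)" by auto
  then show ?case using Suc by simp
qed simp

lemma finite_It_gens: "finite (It_gens n E t)"
proof -
  have "It_gens n E t \<subseteq> sqfree_mon ` Pow {1..n}"
    by (auto simp: It_gens_def independent_set_def)
  then show ?thesis by (rule finite_subset) simp
qed

lemma list_less_iff_first_difference:
  fixes xs ys :: "'a::linorder list"
  assumes "length xs = length ys"
  shows "xs < ys \<longleftrightarrow> (\<exists>i<length xs. take i xs = take i ys \<and> xs!i < ys!i)"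
  using assms by (auto simp: list_less_def lexord_take_index_conv)

section \<open>Linear quotients from an exchange property\<close>

lemma min_gens_ideal_mons_equidegree:
  assumes M: "M \<subseteq> mons n" and deg: "\<And>u. u \<in> M \<Longrightarrow> mdeg n u = D"
  shows "min_gens (ideal_mons n M) = M"
proof (rule set_eqI, rule iffI)
  fix u assume "u \<in> min_gens (ideal_mons n M)"
  then have u: "u \<in> ideal_mons n M" and minimal: "\<forall>v\<in>ideal_mons n M. mdvd v u \<longrightarrow> v = u"
    by (auto simp: min_gens_def)
  then obtain g where "g \<in> M" "mdvd g u" by (auto simp: ideal_mons_def)
  moreover have "g \<in> ideal_mons n M"
    using \<open>g \<in> M\<close> M by (auto intro: mdvd_ideal_mons mdvd_refl)
  ultimately show "u \<in> M" using minimal by auto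
next
  fix u assume u: "u \<in> M"
  have "v = u" if v: "v \<in> ideal_mons n M" "mdvd v u" for v
  proof -
    obtain g where g: "g \<in> M" "mdvd g v" and "v \<in> mons n" using v unfolding ideal_mons_def by blast
    then have "g = u"
      using mdvd_eq_if_mdeg_eq[of g n u] mdvd_trans[of g v u] v u M deg by auto
    then show ?thesis using g v by (simp add: mdvd_antisym)
  qed
  moreover have "u \<in> ideal_mons n M" using u M by (auto intro: mdvd_ideal_mons mdvd_refl)
  ultimately show "u \<in> min_gens (ideal_mons n M)" by (auto simp: min_gens_def)
qed

lemma colon_generated_by_variables:
  assumes G: "G \<subseteq> mons n" and w: "w \<in> mons n"
    and exchange: "\<And>g. g \<in> G \<Longrightarrow> \<exists>p. w p < g p \<and> (\<exists>g'\<in>G. mdvd g' (mmul (var_mon p) w))"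
  shows "generated_by_variables n (colon_mons n (ideal_mons n G) w)"
proof -
  define V where "V = {p\<in>{1..n}. \<exists>g'\<in>G. mdvd g' (mmul (var_mon p) w)}"
  show ?thesis unfolding generated_by_variables_def
  proof (intro exI conjI)
    show "V \<subseteq> {1..n}" by (auto simp: V_def)
    show "colon_mons n (ideal_mons n G) w = ideal_mons n (var_mon ` V)"
    proof (rule set_eqI, rule iffI)
      fix x assume "x \<in> colon_mons n (ideal_mons n G) w"
      then obtain g where x: "x \<in> mons n" and g: "g \<in> G" "mdvd g (mmul x w)"
        by (auto simp: colon_mons_def ideal_mons_def)
      obtain p g' where p: "w p < g p" and g': "g' \<in> G" "mdvd g' (mmul (var_mon p) w)"
        using exchange[OF g(1)] by blast
      have "p \<in> {1..n}" using p g(1) G mons_vanish by fastforce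
      then have "p \<in> V" using g' by (auto simp: V_def)
      moreover have "g p \<le> x p + w p" using g(2) by (simp add: mdvd_def mmul_def)
      then have "mdvd (var_mon p) x" using p by (auto simp: mdvd_def var_mon_def)
      ultimately show "x \<in> ideal_mons n (var_mon ` V)" using x by (blast intro: mdvd_ideal_mons)
    next
      fix x assume "x \<in> ideal_mons n (var_mon ` V)"
      then obtain p g' where x: "x \<in> mons n" and p: "mdvd (var_mon p) x"
        and g': "g' \<in> G" "mdvd g' (mmul (var_mon p) w)"
        unfolding ideal_mons_def V_def by blast
      have "mdvd g' (mmul x w)" using mdvd_trans[OF g'(2) mdvd_mmul_left[OF p]] .
      moreover have "mmul x w \<in> mons n" using x w by (rule mmul_mons)
      ultimately show "x \<in> colon_mons n (ideal_mons n G) w"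
        using g'(1) x by (simp add: colon_mons_def mdvd_ideal_mons)
    qed
  qed
qed

lemma colon_generated_by_variables_if_descending:
  fixes key :: "(nat \<Rightarrow> nat) \<Rightarrow> 'a::linorder"
  assumes ws: "set ws \<subseteq> mons n" and descending: "sorted_wrt (\<lambda>u v. key v < key u) ws"
    and exchange: "\<And>u v. u \<in> set ws \<Longrightarrow> v \<in> set ws \<Longrightarrow> key u < key v \<Longrightarrow>
        \<exists>p. u p < v p \<and> (\<exists>w\<in>set ws. key u < key w \<and> mdvd w (mmul (var_mon p) u))"
    and i: "i < length ws"
  shows "generated_by_variables n (colon_mons n (ideal_mons n (set (take i ws))) (ws!i))"
proof (rule colon_generated_by_variables)
  show "set (take i ws) \<subseteq> mons n" using set_take_subset ws by (rule order_trans)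
  show "ws!i \<in> mons n" using nth_mem[OF i] ws by auto
  fix g assume "g \<in> set (take i ws)"
  then obtain j where j: "j < i" "g = ws!j" using i by (auto simp: in_set_conv_nth)
  have in_ws: "ws!i \<in> set ws" "ws!j \<in> set ws" using i j by auto
  have "key (ws!i) < key (ws!j)" using sorted_wrt_nth_less[OF descending j(1) i] .
  then obtain p w where p: "(ws!i) p < (ws!j) p"
    and w: "w \<in> set ws" "key (ws!i) < key w" "mdvd w (mmul (var_mon p) (ws!i))"
    using exchange[OF in_ws] by blast
  obtain k where k: "k < length ws" "ws!k = w" using w(1) by (auto simp: in_set_conv_nth)
  have "k < i"
  proof (rule ccontr)
    assume "\<not> k < i"
    then have "key w \<le> key (ws!i)"
      using sorted_wrt_nth_less[OF descending, of i k] k by (cases "k = i") auto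
    then show False using w(2) by simp
  qed
  then have "w \<in> set (take i ws)" using k by (auto simp: in_set_conv_nth intro!: exI[of _ k])
  then show "\<exists>p. (ws!i) p < g p \<and> (\<exists>g'\<in>set (take i ws). mdvd g' (mmul (var_mon p) (ws!i)))"
    using p w(3) j by blast
qed

lemma has_linear_quotients_if_exchange:
  fixes key :: "(nat \<Rightarrow> nat) \<Rightarrow> 'a::linorder"
  assumes fin: "finite M" and M: "M \<subseteq> mons n" and deg: "\<And>u. u \<in> M \<Longrightarrow> mdeg n u = D"
    and inj: "inj_on key M"
    and exchange: "\<And>u v. u \<in> M \<Longrightarrow> v \<in> M \<Longrightarrow> key u < key v \<Longrightarrow>
        \<exists>p. u p < v p \<and> (\<exists>w\<in>M. key u < key w \<and> mdvd w (mmul (var_mon p) u))"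
  shows "has_linear_quotients n (ideal_mons n M)"
proof -
  obtain xs where xs: "set xs = M" "distinct xs" using finite_distinct_list[OF fin] by blast
  define ws where "ws = rev (sort_key key xs)"
  have ws: "distinct ws" "set ws = M" using xs by (simp_all add: ws_def)
  have "sorted (map key (sort_key key xs))" by (rule sorted_sort_key)
  moreover have "distinct (map key (sort_key key xs))" using xs inj by (simp add: distinct_map)
  ultimately have "sorted_wrt (<) (map key (sort_key key xs))" by (simp add: strict_sorted_iff)
  then have descending: "sorted_wrt (\<lambda>u v. key v < key u) ws"
    by (simp add: ws_def sorted_wrt_rev sorted_wrt_map)
  have "generated_by_variables n (colon_mons n (ideal_mons n (set (take i ws))) (ws!i))"
    if "i < length ws" for i
    using M exchange that
    by (intro colon_generated_by_variables_if_descending[OF _ descending]) (simp_all add: ws(2))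
  moreover have "min_gens (ideal_mons n M) = M"
    using M deg by (rule min_gens_ideal_mons_equidegree)
  ultimately show ?thesis
    unfolding has_linear_quotients_def using ws by (intro exI[of _ ws]) simp
qed

section \<open>Cutting a weighted sequence into blocks\<close>

text \<open>Read U as the word in which the letter q occurs U q times, cut into consecutive blocks of
  length d + 1. Then blocks_upto d U q is the number of blocks meeting the letters before q, and
  q is a block head if some block starts at an occurrence of q.\<close>

definition blocks_upto :: "nat \<Rightarrow> (nat \<Rightarrow> nat) \<Rightarrow> nat \<Rightarrow> nat" where
  "blocks_upto d U q = (sum U {0..<q} + d) div Suc d"

definition block_heads :: "nat \<Rightarrow> (nat \<Rightarrow> nat) \<Rightarrow> nat set" where
  "block_heads d U = {q. blocks_upto d U q < blocks_upto d U (Suc q)}"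

lemma blocks_upto_concat:
  "a \<le> b \<Longrightarrow> blocks_upto d U b = (sum U {0..<a} + sum U {a..<b} + d) div Suc d"
  by (simp add: blocks_upto_def sum.atLeastLessThan_concat)

lemma blocks_upto_mono: "a \<le> b \<Longrightarrow> blocks_upto d U a \<le> blocks_upto d U b"
  unfolding blocks_upto_def by (intro div_le_mono add_right_mono sum_mono2) auto

lemma blocks_upto_add_block:
  "(sum U {0..<a} + d + Suc d) div Suc d = Suc (blocks_upto d U a)"
  unfolding blocks_upto_def by (subst div_add_self2) simp_all

lemma blocks_upto_le_Suc:
  assumes "a \<le> b" "sum U {a..<b} \<le> Suc d"
  shows "blocks_upto d U b \<le> Suc (blocks_upto d U a)"
proof -
  have "blocks_upto d U b \<le> (sum U {0..<a} + d + Suc d) div Suc d"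
    using assms by (simp add: blocks_upto_concat[of a b] div_le_mono)
  also have "\<dots> = Suc (blocks_upto d U a)"
    by (rule blocks_upto_add_block)
  finally show ?thesis .
qed

lemma blocks_upto_full_block:
  assumes "a \<le> b" "sum U {a..<b} = Suc d"
  shows "blocks_upto d U b = Suc (blocks_upto d U a)"
proof -
  have "blocks_upto d U b = (sum U {0..<a} + d + Suc d) div Suc d"
    using assms by (simp add: blocks_upto_concat[of a b] add.commute add.left_commute)
  also have "\<dots> = Suc (blocks_upto d U a)"
    by (rule blocks_upto_add_block)
  finally show ?thesis .
qed

lemma block_head_pos: "q \<in> block_heads d U \<Longrightarrow> 0 < U q"
  by (rule ccontr) (simp add: block_heads_def blocks_upto_def)

lemma card_block_heads:
  assumes "a \<le> b" "\<And>q. a \<le> q \<Longrightarrow> q < b \<Longrightarrow> U q \<le> Suc d"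
  shows "card (block_heads d U \<inter> {a..<b}) = blocks_upto d U b - blocks_upto d U a"
  using assms
proof (induction b rule: dec_induct)
  case base
  then show ?case by simp
next
  case (step b)
  have bounds: "blocks_upto d U a \<le> blocks_upto d U b"
    "blocks_upto d U b \<le> blocks_upto d U (Suc b)"
    "blocks_upto d U (Suc b) \<le> Suc (blocks_upto d U b)"
    using step.prems step.hyps by (auto intro: blocks_upto_mono blocks_upto_le_Suc)
  have IH: "card (block_heads d U \<inter> {a..<b}) = blocks_upto d U b - blocks_upto d U a"
    using step by simp
  show ?case
  proof (cases "b \<in> block_heads d U")
    case True
    then have "block_heads d U \<inter> {a..<Suc b} = insert b (block_heads d U \<inter> {a..<b})"
      using step.hyps by auto
    then show ?thesis using True bounds IH by (simp add: block_heads_def)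
  next
    case False
    then have "block_heads d U \<inter> {a..<Suc b} = block_heads d U \<inter> {a..<b}"
      by (auto simp: less_Suc_eq)
    then show ?thesis using False bounds IH by (simp add: block_heads_def)
  qed
qed

lemma card_block_heads_le_one:
  assumes "sum U {a..<b} \<le> Suc d"
  shows "card (block_heads d U \<inter> {a..<b}) \<le> 1"
proof (cases "a \<le> b")
  case True
  have "U q \<le> Suc d" if "a \<le> q" "q < b" for q
    using member_le_sum[of q "{a..<b}" U] that assms by simp
  then show ?thesis
    using card_block_heads[OF True] blocks_upto_le_Suc[OF True assms] by simp
qed simp

lemma block_heads_meet_full_block:
  assumes "sum U {a..<b} = Suc d"
  shows "block_heads d U \<inter> {a..<b} \<noteq> {}"
proof -
  have "a \<le> b"
  proof (rule ccontr)
    assume "\<not> a \<le> b"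
    then show False using assms by simp
  qed
  have "U q \<le> Suc d" if "a \<le> q" "q < b" for q
    using member_le_sum[of q "{a..<b}" U] that assms by simp
  then have "card (block_heads d U \<inter> {a..<b}) = 1"
    using card_block_heads[OF \<open>a \<le> b\<close>] blocks_upto_full_block[OF \<open>a \<le> b\<close> assms] by simp
  then show ?thesis by auto
qed

section \<open>Proper interval models\<close>

locale proper_interval_model =
  fixes n :: nat and E :: "nat set set" and l r :: "nat \<Rightarrow> real"
  assumes simple: "simple_graph n E"
    and interval: "\<And>i. i \<in> {1..n} \<Longrightarrow> l i \<le> r i"
    and proper: "\<And>i j. i \<in> {1..n} \<Longrightarrow> j \<in> {1..n} \<Longrightarrow> \<not> {l i..r i} \<subset> {l j..r j}"
    and adjacent_iff: "\<And>i j. i \<in> {1..n} \<Longrightarrow> j \<in> {1..n} \<Longrightarrow> i \<noteq> j \<Longrightarrow>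
        {i, j} \<in> E \<longleftrightarrow> {l i..r i} \<inter> {l j..r j} \<noteq> {}"

lemma proper_interval_graph_model:
  "proper_interval_graph n E \<Longrightarrow> \<exists>l r. proper_interval_model n E l r"
  unfolding proper_interval_graph_def proper_interval_model_def by (simp add: Ball_def)

context proper_interval_model
begin

definition vs :: "nat list" where
  "vs = sort_key l [1..<Suc n]"

lemma length_vs [simp]: "length vs = n"
  by (simp add: vs_def)

lemma distinct_vs: "distinct vs"
  by (simp add: vs_def)

lemma set_vs: "set vs = {1..n}"
  by (auto simp: vs_def)

lemma vs_in: "q < n \<Longrightarrow> vs!q \<in> {1..n}"
  using nth_mem[of q vs] set_vs by simp

lemma vs_eq_iff: "q < n \<Longrightarrow> q' < n \<Longrightarrow> vs!q = vs!q' \<longleftrightarrow> q = q'"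
  using distinct_vs by (simp add: nth_eq_iff_index_eq)

lemma left_mono: "a \<le> b \<Longrightarrow> b < n \<Longrightarrow> l (vs!a) \<le> l (vs!b)"
  using sorted_nth_mono[of "map l vs" a b] by (simp add: vs_def)

lemma right_mono:
  assumes "a \<le> b" "b < n"
  shows "r (vs!a) \<le> r (vs!b)"
proof (rule ccontr)
  assume "\<not> r (vs!a) \<le> r (vs!b)"
  moreover have "l (vs!a) \<le> l (vs!b)" "l (vs!b) \<le> r (vs!b)"
    using assms left_mono interval vs_in by auto
  ultimately have "{l (vs!b)..r (vs!b)} \<subset> {l (vs!a)..r (vs!a)}"
    by (auto simp: subset_iff_psubset_eq)
  then show False using proper vs_in assms by auto
qed

lemma sum_image_vs:
  "Q \<subseteq> {..<n} \<Longrightarrow> (\<Sum>i\<in>(!) vs ` Q. u i) = (\<Sum>q\<in>Q. u (vs!q))"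
  using inj_on_nth[OF distinct_vs, of Q] by (subst sum.reindex) auto

lemma image_vs: "(!) vs ` {..<n} = {1..n}"
  using nth_image[of n vs] set_vs by (simp add: atLeast0LessThan)

lemma mdeg_by_positions: "mdeg n u = (\<Sum>q<n. u (vs!q))"
  unfolding mdeg_def image_vs[symmetric] by (simp add: sum_image_vs)

definition positions_at :: "real \<Rightarrow> nat set" where
  "positions_at p = {q. q < n \<and> l (vs!q) \<le> p \<and> p \<le> r (vs!q)}"

definition clique_at :: "real \<Rightarrow> nat set" where
  "clique_at p = {i\<in>{1..n}. l i \<le> p \<and> p \<le> r i}"

lemma clique_at_eq_image: "clique_at p = (!) vs ` positions_at p"
proof -
  have "clique_at p = {i \<in> (!) vs ` {..<n}. l i \<le> p \<and> p \<le> r i}"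
    by (simp add: clique_at_def image_vs)
  then show ?thesis by (auto simp: positions_at_def)
qed

lemma positions_at_convex:
  assumes "a \<le> z" "z \<le> b" "a \<in> positions_at p" "b \<in> positions_at p"
  shows "z \<in> positions_at p"
  using assms left_mono[of z b] right_mono[of a z] by (auto simp: positions_at_def)

lemma positions_at_interval:
  obtains a b where "positions_at p = {a..<b}"
proof (cases "positions_at p = {}")
  case True
  then show ?thesis using that[of 0 0] by simp
next
  case False
  define P where "P = positions_at p"
  have fin: "finite P" by (simp add: P_def positions_at_def)
  have "P = {Min P..<Suc (Max P)}"
  proof
    show "P \<subseteq> {Min P..<Suc (Max P)}" using fin by (auto simp: less_Suc_eq_le)
    show "{Min P..<Suc (Max P)} \<subseteq> P"
    proof
      fix z assume "z \<in> {Min P..<Suc (Max P)}"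
      moreover have "P \<noteq> {}" using False by (simp add: P_def)
      ultimately show "z \<in> P"
        using positions_at_convex[of "Min P" z "Max P" p] Min_in[OF fin] Max_in[OF fin]
        by (auto simp: P_def)
    qed
  qed
  then show ?thesis unfolding P_def by (rule that)
qed

definition load :: "(nat \<Rightarrow> nat) \<Rightarrow> real \<Rightarrow> nat" where
  "load u p = (\<Sum>i\<in>clique_at p. u i)"

lemma load_by_positions: "load u p = (\<Sum>q\<in>positions_at p. u (vs!q))"
  unfolding load_def clique_at_eq_image by (rule sum_image_vs) (auto simp: positions_at_def)

lemma load_mmul: "load (mmul u v) p = load u p + load v p"
  by (simp add: load_def mmul_def sum.distrib)

lemma le_load_left_endpoint: "i \<in> {1..n} \<Longrightarrow> u i \<le> load u (l i)"
  unfolding load_def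
  by (rule member_le_sum) (auto simp: clique_at_def interval)

lemma load_sqfree_mon: "load (sqfree_mon S) p = card (clique_at p \<inter> S)"
  by (simp add: load_def sqfree_mon_def sum.If_cases clique_at_def)

lemma card_clique_at_inter_independent:
  assumes "independent_set n E S"
  shows "card (clique_at p \<inter> S) \<le> 1"
proof -
  have "a = b" if "a \<in> clique_at p \<inter> S" "b \<in> clique_at p \<inter> S" for a b
  proof (rule ccontr)
    assume "a \<noteq> b"
    have "a \<in> {1..n}" "b \<in> {1..n}" "p \<in> {l a..r a} \<inter> {l b..r b}"
      using that by (auto simp: clique_at_def)
    then have "{a, b} \<in> E" using adjacent_iff[of a b] \<open>a \<noteq> b\<close> by blast
    then show False using assms that by (auto simp: independent_set_def)
  qed
  then show ?thesis by (auto simp: card_le_Suc0_iff_eq clique_at_def)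
qed

section \<open>The generators of the powers\<close>

definition load_bounded :: "nat \<Rightarrow> nat \<Rightarrow> (nat \<Rightarrow> nat) set" where
  "load_bounded d t = {u \<in> mons n. mdeg n u = d * t \<and> (\<forall>p. load u p \<le> d)}"

lemma It_gens_load_bounded: "It_gens n E t \<subseteq> load_bounded 1 t"
proof
  fix g assume "g \<in> It_gens n E t"
  then obtain S where g: "g = sqfree_mon S" and S: "independent_set n E S" "card S = t"
    by (auto simp: It_gens_def)
  then have S_vertices: "S \<subseteq> {1..n}" by (simp add: independent_set_def)
  have "sqfree_mon S \<in> mons n" using S_vertices by (auto simp: mons_def sqfree_mon_def)
  moreover have "mdeg n (sqfree_mon S) = t" using S_vertices S(2) by (simp add: mdeg_sqfree_mon)
  ultimately show "g \<in> load_bounded 1 t"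
    using card_clique_at_inter_independent[OF S(1)] by (simp add: g load_bounded_def load_sqfree_mon)
qed

lemma pow_gens_subset_load_bounded: "pow_gens (It_gens n E t) d \<subseteq> load_bounded d t"
proof (induction d)
  case 0
  show ?case by (simp add: load_bounded_def mons_def mdeg_def load_def)
next
  case (Suc d)
  show ?case
  proof
    fix u assume "u \<in> pow_gens (It_gens n E t) (Suc d)"
    then obtain g h where u: "u = mmul g h" and "g \<in> It_gens n E t" "h \<in> pow_gens (It_gens n E t) d"
      by auto
    then have g: "g \<in> load_bounded 1 t" and h: "h \<in> load_bounded d t"
      using It_gens_load_bounded Suc.IH by auto
    have "load u p \<le> Suc d" for p
    proof -
      have "load g p \<le> 1" "load h p \<le> d" using g h by (auto simp: load_bounded_def)
      then show ?thesis by (simp add: u load_mmul)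
    qed
    then show "u \<in> load_bounded (Suc d) t"
      using g h by (simp add: u load_bounded_def mmul_mons mdeg_mmul)
  qed
qed

definition heads :: "nat \<Rightarrow> (nat \<Rightarrow> nat) \<Rightarrow> nat set" where
  "heads d u = (!) vs ` (block_heads d (\<lambda>q. u (vs!q)) \<inter> {..<n})"

lemma heads_pos: "i \<in> heads d u \<Longrightarrow> 0 < u i"
  by (auto simp: heads_def dest: block_head_pos)

lemma sum_positions_le_load:
  "A \<subseteq> positions_at p \<Longrightarrow> (\<Sum>q\<in>A. u (vs!q)) \<le> load u p"
  unfolding load_by_positions by (rule sum_mono2) (simp_all add: positions_at_def)

lemma overlapping_positions:
  assumes "q \<le> q'" "q' < n" "{l (vs!q)..r (vs!q)} \<inter> {l (vs!q')..r (vs!q')} \<noteq> {}"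
  shows "{q..<Suc q'} \<subseteq> positions_at (r (vs!q))"
proof -
  have "q \<in> positions_at (r (vs!q))"
    using assms(1,2) interval vs_in by (simp add: positions_at_def)
  moreover have "l (vs!q') \<le> r (vs!q)" using assms(3) by auto
  then have "q' \<in> positions_at (r (vs!q))"
    using right_mono[OF assms(1,2)] assms(2) by (simp add: positions_at_def)
  ultimately show ?thesis using positions_at_convex by (auto simp: less_Suc_eq_le)
qed

lemma head_intervals_disjoint:
  assumes load: "\<And>p. load u p \<le> Suc d"
    and heads: "q \<in> block_heads d (\<lambda>q. u (vs!q))" "q' \<in> block_heads d (\<lambda>q. u (vs!q))"
    and "q < q'" "q' < n"
  shows "{l (vs!q)..r (vs!q)} \<inter> {l (vs!q')..r (vs!q')} = {}"
proof (rule ccontr)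
  assume "{l (vs!q)..r (vs!q)} \<inter> {l (vs!q')..r (vs!q')} \<noteq> {}"
  then have "{q..<Suc q'} \<subseteq> positions_at (r (vs!q))"
    using overlapping_positions \<open>q < q'\<close> \<open>q' < n\<close> by simp
  then have "(\<Sum>z\<in>{q..<Suc q'}. u (vs!z)) \<le> load u (r (vs!q))"
    by (rule sum_positions_le_load)
  also have "\<dots> \<le> Suc d" by (rule load)
  finally have "card (block_heads d (\<lambda>q. u (vs!q)) \<inter> {q..<Suc q'}) \<le> 1"
    by (rule card_block_heads_le_one)
  moreover have "{q, q'} \<subseteq> block_heads d (\<lambda>q. u (vs!q)) \<inter> {q..<Suc q'}"
    using heads \<open>q < q'\<close> by auto
  then have "card {q, q'} \<le> card (block_heads d (\<lambda>q. u (vs!q)) \<inter> {q..<Suc q'})"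
    by (rule card_mono[rotated]) simp
  ultimately show False using \<open>q < q'\<close> by simp
qed

lemma independent_heads:
  assumes load: "\<And>p. load u p \<le> Suc d"
  shows "independent_set n E (heads d u)"
  unfolding independent_set_def
proof (intro conjI ballI)
  show "heads d u \<subseteq> {1..n}" using vs_in by (auto simp: heads_def)
  fix a b assume "a \<in> heads d u" "b \<in> heads d u"
  then obtain q q' where q: "q \<in> block_heads d (\<lambda>q. u (vs!q))" "q < n" "a = vs!q"
    and q': "q' \<in> block_heads d (\<lambda>q. u (vs!q))" "q' < n" "b = vs!q'"
    by (auto simp: heads_def)
  show "{a, b} \<notin> E"
  proof
    assume edge: "{a, b} \<in> E"
    have "a \<noteq> b"
    proof
      assume "a = b"
      then show False using edge simple by (auto simp: simple_graph_def)
    qed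
    then have "q \<noteq> q'" using q q' by auto
    have "{l a..r a} \<inter> {l b..r b} \<noteq> {}"
      using edge adjacent_iff[of a b] \<open>a \<noteq> b\<close> q q' vs_in by simp
    moreover have "{l a..r a} \<inter> {l b..r b} = {}"
    proof (cases "q < q'")
      case True
      then show ?thesis using head_intervals_disjoint[OF load q(1) q'(1)] q q' by simp
    next
      case False
      then have "q' < q" using \<open>q \<noteq> q'\<close> by simp
      then show ?thesis using head_intervals_disjoint[OF load q'(1) q(1)] q q' by (simp add: Int_commute)
    qed
    ultimately show False by contradiction
  qed
qed

lemma card_heads:
  assumes load: "\<And>p. load u p \<le> Suc d" and deg: "mdeg n u = Suc d * t"
  shows "card (heads d u) = t"
proof -
  let ?U = "\<lambda>q. u (vs!q)"
  have "?U q \<le> Suc d" if "q < n" for q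
    using le_trans[OF le_load_left_endpoint[OF vs_in[OF that]] load] .
  then have "card (block_heads d ?U \<inter> {0..<n}) = blocks_upto d ?U n - blocks_upto d ?U 0"
    by (intro card_block_heads) auto
  also have "\<dots> = (Suc d * t + d) div Suc d"
    using deg by (simp add: blocks_upto_def mdeg_by_positions atLeast0LessThan)
  also have "\<dots> = t"
    using div_mult_self1[of "Suc d" d t] by (simp add: add.commute mult.commute)
  finally have "card (block_heads d ?U \<inter> {..<n}) = t" by (simp add: atLeast0LessThan)
  moreover have "inj_on ((!) vs) (block_heads d ?U \<inter> {..<n})"
    by (rule inj_on_nth[OF distinct_vs]) simp
  ultimately show ?thesis by (simp add: heads_def card_image)
qed

lemma heads_meet_full_clique:
  assumes "load u p = Suc d"
  shows "heads d u \<inter> clique_at p \<noteq> {}"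
proof -
  obtain a b where ab: "positions_at p = {a..<b}" by (rule positions_at_interval)
  then have "(\<Sum>q\<in>{a..<b}. u (vs!q)) = Suc d" using assms by (simp add: load_by_positions)
  then have "block_heads d (\<lambda>q. u (vs!q)) \<inter> positions_at p \<noteq> {}"
    unfolding ab by (rule block_heads_meet_full_block)
  then obtain q where "q \<in> block_heads d (\<lambda>q. u (vs!q))" "q \<in> positions_at p"
    by blast
  moreover have "q < n" using \<open>q \<in> positions_at p\<close> by (simp add: positions_at_def)
  ultimately have "vs!q \<in> heads d u \<inter> clique_at p"
    by (auto simp: heads_def clique_at_eq_image)
  then show ?thesis by blast
qed

lemma load_bounded_Suc_decompose:
  assumes u: "u \<in> load_bounded (Suc d) t"
  defines "g \<equiv> sqfree_mon (heads d u)"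
  shows "g \<in> It_gens n E t" and "mmul g (\<lambda>i. u i - g i) = u"
    and "(\<lambda>i. u i - g i) \<in> load_bounded d t"
proof -
  have load: "\<And>p. load u p \<le> Suc d" and deg: "mdeg n u = Suc d * t" and "u \<in> mons n"
    using u by (auto simp: load_bounded_def)
  have indep: "independent_set n E (heads d u)" using independent_heads[OF load] .
  then show "g \<in> It_gens n E t"
    using card_heads[OF load deg] by (auto simp: g_def It_gens_def)
  have "mdvd g u" using heads_pos by (auto simp: g_def mdvd_def sqfree_mon_def Suc_leI)
  then show split: "mmul g (\<lambda>i. u i - g i) = u" by (rule mmul_quotient)
  define u' where "u' = (\<lambda>i. u i - g i)"
  have "u' \<in> mons n" using \<open>u \<in> mons n\<close> by (simp add: u'_def mons_def)
  moreover have "mdeg n u' = d * t"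
    using mdeg_mmul[of n g u'] split deg card_heads[OF load deg] indep
    by (simp add: u'_def g_def mdeg_sqfree_mon independent_set_def)
  moreover have "load u' p \<le> d" for p
  proof -
    have sum: "load u p = load g p + load u' p"
      using split load_mmul[of g u' p] by (simp add: u'_def)
    have "load g p \<le> 1"
      using card_clique_at_inter_independent[OF indep] by (simp add: g_def load_sqfree_mon)
    moreover have "1 \<le> load g p" if "load u p = Suc d"
      using heads_meet_full_clique[OF that]
      by (simp add: g_def load_sqfree_mon card_gt_0_iff clique_at_def Int_commute Suc_le_eq)
    ultimately show ?thesis
      using sum load[of p] by (cases "load u p = Suc d") simp_all
  qed
  ultimately show "u' \<in> load_bounded d t" by (simp add: load_bounded_def)
qed

lemma load_bounded_subset_pow_gens: "load_bounded d t \<subseteq> pow_gens (It_gens n E t) d"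
proof (induction d)
  case 0
  have "u = (\<lambda>k. 0)" if "u \<in> load_bounded 0 t" for u
  proof
    fix k
    have "u \<in> mons n" "mdeg n u = 0" using that by (auto simp: load_bounded_def)
    then show "u k = 0" by (cases "k \<in> {1..n}") (auto simp: mdeg_def mons_vanish)
  qed
  then show ?case by auto
next
  case (Suc d)
  show ?case
  proof
    fix u assume "u \<in> load_bounded (Suc d) t"
    from load_bounded_Suc_decompose[OF this] Suc.IH
    show "u \<in> pow_gens (It_gens n E t) (Suc d)" by (auto intro!: exI)
  qed
qed

lemma pow_gens_eq_load_bounded: "pow_gens (It_gens n E t) d = load_bounded d t"
  using pow_gens_subset_load_bounded load_bounded_subset_pow_gens by (rule subset_antisym)

section \<open>The exchange property\<close>

definition key :: "(nat \<Rightarrow> nat) \<Rightarrow> nat list" where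
  "key u = map u vs"

lemma key_less_iff:
  "key u < key v \<longleftrightarrow> (\<exists>q<n. (\<forall>x<q. u (vs!x) = v (vs!x)) \<and> u (vs!q) < v (vs!q))"
proof -
  have "take q (key u) = take q (key v) \<longleftrightarrow> (\<forall>x<q. u (vs!x) = v (vs!x))" if "q < n" for q
    using that by (auto simp: key_def list_eq_iff_nth_eq)
  then show ?thesis by (auto simp: list_less_iff_first_difference key_def)
qed

lemma inj_on_key: "inj_on key (mons n)"
proof
  fix u v assume uv: "u \<in> mons n" "v \<in> mons n" "key u = key v"
  show "u = v"
  proof
    fix i show "u i = v i"
    proof (cases "i \<in> {1..n}")
      case True
      then show ?thesis using uv(3) set_vs by (auto simp: key_def map_eq_conv)
    next
      case False
      then show ?thesis using uv(1,2) by (simp add: mons_vanish)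
    qed
  qed
qed

lemma positions_at_before:
  assumes "vs!q \<in> clique_at p" "vs!s \<notin> clique_at p" "q \<le> s" "s < n"
  shows "positions_at p \<subseteq> {..<s}"
proof
  fix x assume x: "x \<in> positions_at p"
  show "x \<in> {..<s}"
  proof (rule ccontr)
    assume "x \<notin> {..<s}"
    then have "l (vs!s) \<le> p" using left_mono[of s x] x by (auto simp: positions_at_def)
    moreover have "p \<le> r (vs!s)"
      using assms(1) right_mono[OF assms(3,4)] by (auto simp: clique_at_def)
    ultimately show False using assms(2) vs_in[OF assms(4)] by (simp add: clique_at_def)
  qed
qed

lemma exchange_var_load_bounded:
  assumes u: "u \<in> load_bounded m t" and v: "v \<in> load_bounded m t"
    and "q < s" "s < n" and below: "\<And>x. x < s \<Longrightarrow> u (vs!x) \<le> v (vs!x)"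
    and "u (vs!q) < v (vs!q)" and "0 < u (vs!s)"
  shows "exchange_var u (vs!q) (vs!s) \<in> load_bounded m t"
proof -
  define w where "w = exchange_var u (vs!q) (vs!s)"
  have in_vs: "vs!q \<in> {1..n}" "vs!s \<in> {1..n}" using vs_in \<open>q < s\<close> \<open>s < n\<close> by auto
  have "w \<in> mons n" using u in_vs by (simp add: w_def load_bounded_def exchange_var_mons)
  moreover have "mdeg n w = m * t"
    using sum_exchange_var[of "{1..n}" u "vs!s" "vs!q"] \<open>0 < u (vs!s)\<close> in_vs u
    by (simp add: w_def mdeg_def load_bounded_def)
  moreover have "load w p \<le> m" for p
  proof -
    have exch: "load w p + (if vs!s \<in> clique_at p then 1 else 0) =
        load u p + (if vs!q \<in> clique_at p then 1 else 0)"
      using sum_exchange_var[of "clique_at p" u "vs!s" "vs!q"] \<open>0 < u (vs!s)\<close>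
      by (simp add: w_def load_def clique_at_def)
    show ?thesis
    proof (cases "vs!q \<in> clique_at p \<and> vs!s \<notin> clique_at p")
      case True
      then have "positions_at p \<subseteq> {..<s}"
        using positions_at_before[of q p s] \<open>q < s\<close> \<open>s < n\<close> by simp
      then have "load u p < load v p"
        unfolding load_by_positions
        using below True \<open>u (vs!q) < v (vs!q)\<close> \<open>q < s\<close>
        by (intro sum_strict_mono_ex1) (auto simp: positions_at_def clique_at_eq_image
            inj_image_mem_iff[OF inj_on_nth])
      moreover have "load v p \<le> m" using v by (simp add: load_bounded_def)
      ultimately show ?thesis using exch True by simp
    next
      case False
      moreover have "load u p \<le> m" using u by (simp add: load_bounded_def)
      ultimately show ?thesis using exch by (auto split: if_splits)
    qed
  qed
  ultimately show ?thesis by (simp add: w_def load_bounded_def)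
qed

lemma load_bounded_exchange:
  assumes u: "u \<in> load_bounded m t" and v: "v \<in> load_bounded m t" and "key u < key v"
  shows "\<exists>p. u p < v p \<and> (\<exists>w\<in>load_bounded m t. key u < key w \<and> mdvd w (mmul (var_mon p) u))"
proof -
  obtain q where q: "q < n" "\<And>x. x < q \<Longrightarrow> u (vs!x) = v (vs!x)" "u (vs!q) < v (vs!q)"
    using \<open>key u < key v\<close> by (auto simp: key_less_iff)
  have "\<exists>s<n. v (vs!s) < u (vs!s)"
  proof (rule ccontr)
    assume "\<not> (\<exists>s<n. v (vs!s) < u (vs!s))"
    then have "u (vs!x) \<le> v (vs!x)" if "x < n" for x
      using that not_less by blast
    then have "mdeg n u < mdeg n v"
      unfolding mdeg_by_positions using q by (intro sum_strict_mono_ex1) auto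
    then show False using u v by (simp add: load_bounded_def)
  qed
  then obtain s where s: "s < n" "v (vs!s) < u (vs!s)"
    and below: "\<And>x. x < s \<Longrightarrow> u (vs!x) \<le> v (vs!x)"
    using exists_least_iff[of "\<lambda>s. s < n \<and> v (vs!s) < u (vs!s)"] by (auto simp: not_less)
  have "q < s"
    using q s less_linear[of q s] by (auto simp: less_imp_le)
  define w where "w = exchange_var u (vs!q) (vs!s)"
  have "w \<in> load_bounded m t"
    unfolding w_def using u v \<open>q < s\<close> s below q(3) by (intro exchange_var_load_bounded) auto
  moreover have "vs!x \<noteq> vs!q" "vs!x \<noteq> vs!s" if "x < q" for x
    using that \<open>q < s\<close> s(1) vs_eq_iff by auto
  then have "key u < key w"
    unfolding key_less_iff w_def using q(1) \<open>q < s\<close> s(1) vs_eq_iff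
    by (auto simp: exchange_var_other exchange_var_same intro!: exI[of _ q])
  moreover have "mdvd w (mmul (var_mon (vs!q)) u)" by (simp add: w_def exchange_var_mdvd)
  ultimately show ?thesis using q(3) by blast
qed

end

theorem theorem2p7:
  fixes n t m :: nat and E :: "nat set set"
  assumes "proper_interval_graph n E" and "t \<ge> 2" and "m \<ge> 1"
  shows "has_linear_quotients n (ideal_mons n (pow_gens (It_gens n E t) m))"
proof -
  obtain l r where "proper_interval_model n E l r"
    using proper_interval_graph_model[OF assms(1)] by blast
  then interpret proper_interval_model n E l r .
  have gens: "pow_gens (It_gens n E t) m = load_bounded m t"
    by (rule pow_gens_eq_load_bounded)
  show ?thesis
    unfolding gens
  proof (rule has_linear_quotients_if_exchange[where key = key and D = "m * t"])
    show "finite (load_bounded m t)"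
      using finite_pow_gens[OF finite_It_gens] by (simp add: gens[symmetric])
    show sub: "load_bounded m t \<subseteq> mons n" and "\<And>u. u \<in> load_bounded m t \<Longrightarrow> mdeg n u = m * t"
      by (auto simp: load_bounded_def)
    show "inj_on key (load_bounded m t)"
      using inj_on_key sub by (rule inj_on_subset)
  qed (rule load_bounded_exchange)
qed

end
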